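(* Let $V$, $f$, $\mathcal{A}$, $k,\tau,\eta$ be as described in the context (in particular $f$ normalized monotone submodular, $\mathcal{A}$ satisfying the $\beta$-iterative property, $\eta\ge4(\log k+1)$, $2\le\tau\le\frac{k}{3\eta(\log k+2)}$), and let $X$ and $Y$ be buckets constructed by PRo such that $Y$ is constructed at a later time than $X$. For any set $E_Y\subseteq Y$, $$f(X\cup(Y\setminus E_Y))\ge\frac{1}{1+\alpha}f(Y)\quad\text{and}\quad f(E_Y\mid X)\le\alpha f(X),$$ where $\alpha=\beta\frac{|E_Y|}{|X|}$.
   Context: Notation: $f(Y\mid X):=f(X\cup Y)-f(X)$; logarithms are to base 2. $V$ is a finite ground set, $f:2^V\to\mathbb{R}_{\ge0}$ is normalized ($f(\emptyset)=0$), monotone and submodular. A subroutine $\mathcal{A}(k',T)$ outputs an ordered set $(v_1,\dots,v_{k'})$ of elements of $T\subseteq V$; $\mathcal{A}_i(T)=\{v_1,\dots,v_i\}$; it satisfies the $\beta$-iterative property ($\beta\ge1$) if $f(\mathcal{A}_{i+1}(T))-f(\mathcal{A}_i(T))\ge\frac1\beta\max_{v\in T}f(v\mid\mathcal{A}_i(T))$ for all $T,i$. Algorithm PRo (inputs $V,k,\tau,\eta\in\mathbb{N}_+,\mathcal{A}$): $S_0\leftarrow\emptyset$; for $i=0,\dots,\lceil\log\tau\rceil$ and for $j=1,\dots,\lceil\tau/2^i\rceil$: $B_j\leftarrow\mathcal{A}(2^i\eta,V\setminus S_0)$, $S_0\leftarrow S_0\cup B_j$ (each such $B_j$ is a bucket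 of partition $i$); then $S_1\leftarrow\mathcal{A}(k-|S_0|,V\setminus S_0)$; output $S=S_0\cup S_1$. *)

theory Defs
  imports Complex_Main
begin

definition normalized :: "('a set \<Rightarrow> real) \<Rightarrow> bool" where
  "normalized f \<longleftrightarrow> f {} = 0"

definition nonneg_on :: "'a set \<Rightarrow> ('a set \<Rightarrow> real) \<Rightarrow> bool" where
  "nonneg_on V f \<longleftrightarrow> (\<forall>A. A \<subseteq> V \<longrightarrow> f A \<ge> 0)"

definition monotone_on_sets :: "'a set \<Rightarrow> ('a set \<Rightarrow> real) \<Rightarrow> bool" where
  "monotone_on_sets V f \<longleftrightarrow> (\<forall>A B. A \<subseteq> B \<and> B \<subseteq> V \<longrightarrow> f A \<le> f B)"

definition submodular_on :: "'a set \<Rightarrow> ('a set \<Rightarrow> real) \<Rightarrow> bool" where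
  "submodular_on V f \<longleftrightarrow>
     (\<forall>A B. A \<subseteq> V \<and> B \<subseteq> V \<longrightarrow> f (A \<union> B) + f (A \<inter> B) \<le> f A + f B)"

definition marg :: "('a set \<Rightarrow> real) \<Rightarrow> 'a set \<Rightarrow> 'a set \<Rightarrow> real" where
  "marg f Y X = f (X \<union> Y) - f X"

definition valid_subroutine :: "'a set \<Rightarrow> (nat \<Rightarrow> 'a set \<Rightarrow> 'a list) \<Rightarrow> bool" where
  "valid_subroutine V A \<longleftrightarrow>
     (\<forall>k' T. T \<subseteq> V \<longrightarrow> distinct (A k' T) \<and> set (A k' T) \<subseteq> T \<and>
                         length (A k' T) = min k' (card T))"

definition prefix_set :: "(nat \<Rightarrow> 'a set \<Rightarrow> 'a list) \<Rightarrow> nat \<Rightarrow> 'a set \<Rightarrow> nat \<Rightarrow> 'a set" where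
  "prefix_set A k' T i = set (take i (A k' T))"

definition beta_iterative ::
  "'a set \<Rightarrow> ('a set \<Rightarrow> real) \<Rightarrow> real \<Rightarrow> (nat \<Rightarrow> 'a set \<Rightarrow> 'a list) \<Rightarrow> bool" where
  "beta_iterative V f \<beta> A \<longleftrightarrow>
     (\<forall>k' T i. T \<subseteq> V \<and> i < length (A k' T) \<longrightarrow>
        f (prefix_set A k' T (Suc i)) - f (prefix_set A k' T i)
          \<ge> (1 / \<beta>) * Max ((\<lambda>v. marg f {v} (prefix_set A k' T i)) ` T))"

definition pro_sizes :: "nat \<Rightarrow> nat \<Rightarrow> nat list" where
  "pro_sizes \<tau> \<eta> =
     concat (map (\<lambda>i. replicate (nat \<lceil>real \<tau> / 2 ^ i\<rceil>) (2 ^ i * \<eta>))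
                 [0..<Suc (nat \<lceil>log 2 (real \<tau>)\<rceil>)])"

fun pro_buckets_aux :: "(nat \<Rightarrow> 'a set \<Rightarrow> 'a list) \<Rightarrow> 'a set \<Rightarrow> 'a set \<Rightarrow> nat list \<Rightarrow> 'a set list" where
  "pro_buckets_aux A V S0 [] = []"
| "pro_buckets_aux A V S0 (s # ss) =
     (let B = set (A s (V - S0)) in B # pro_buckets_aux A V (S0 \<union> B) ss)"

definition pro_buckets :: "(nat \<Rightarrow> 'a set \<Rightarrow> 'a list) \<Rightarrow> 'a set \<Rightarrow> nat \<Rightarrow> nat \<Rightarrow> 'a set list" where
  "pro_buckets A V \<tau> \<eta> = pro_buckets_aux A V {} (pro_sizes \<tau> \<eta>)"

end

theory Submission
  imports Defs
begin

text \<open>A bucket X is the output of the subroutine on a set T that still contains every later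
  bucket Y. The \<open>\<beta>\<close>-iterative property, telescoped over the construction of X and combined with
  diminishing returns, shows that every element of T gains at most \<open>\<beta> f(X) / |X|\<close> on top of X;
  by subadditivity \<open>f(E | X) \<le> \<alpha> f(X)\<close>. Removing E from X \<union> Y therefore loses at most
  \<open>f(E | X) \<le> \<alpha> f(X) \<le> \<alpha> f(X \<union> (Y - E))\<close>, and monotonicity gives the first inequality.\<close>

lemma length_pro_buckets_aux: "length (pro_buckets_aux A V S0 ss) = length ss"
  by (induction ss arbitrary: S0) (auto simp: Let_def)

lemma pro_buckets_aux_nth_subset:
  assumes "valid_subroutine V A" and "q < length ss"
  shows "pro_buckets_aux A V S0 ss ! q \<subseteq> V - S0"
  using assms(2)
proof (induction ss arbitrary: S0 q)
  case Nil
  then show ?case by simp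
next
  case (Cons s ss)
  have B: "set (A s (V - S0)) \<subseteq> V - S0"
    using assms(1) unfolding valid_subroutine_def by blast
  show ?case
  proof (cases q)
    case 0
    then show ?thesis using B by (simp add: Let_def)
  next
    case (Suc q')
    with Cons have "pro_buckets_aux A V (S0 \<union> set (A s (V - S0))) ss ! q'
        \<subseteq> V - (S0 \<union> set (A s (V - S0)))" by simp
    then show ?thesis using Suc by (auto simp: Let_def)
  qed
qed

lemma pro_buckets_aux_later_bucket:
  assumes "valid_subroutine V A" and "p < q" and "q < length ss"
  shows "\<exists>S. pro_buckets_aux A V S0 ss ! p = set (A (ss ! p) (V - S)) \<and>
             pro_buckets_aux A V S0 ss ! q \<subseteq> V - S - pro_buckets_aux A V S0 ss ! p"
  using assms(2,3)
proof (induction ss arbitrary: S0 p q)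
  case Nil
  then show ?case by simp
next
  case (Cons s ss)
  define B where "B = set (A s (V - S0))"
  obtain q' where q': "q = Suc q'" using Cons.prems by (cases q) auto
  have later: "pro_buckets_aux A V S0 (s # ss) ! q = pro_buckets_aux A V (S0 \<union> B) ss ! q'"
    using q' by (simp add: Let_def B_def)
  show ?case
  proof (cases p)
    case 0
    have "pro_buckets_aux A V (S0 \<union> B) ss ! q' \<subseteq> V - (S0 \<union> B)"
      using pro_buckets_aux_nth_subset[OF assms(1)] Cons.prems q' by simp
    then show ?thesis using 0 later by (intro exI[of _ S0]) (auto simp: Let_def B_def)
  next
    case (Suc p')
    with Cons.prems q' have "p' < q'" "q' < length ss" by auto
    then obtain S where
      "pro_buckets_aux A V (S0 \<union> B) ss ! p' = set (A (ss ! p') (V - S))"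
      "pro_buckets_aux A V (S0 \<union> B) ss ! q' \<subseteq> V - S - pro_buckets_aux A V (S0 \<union> B) ss ! p'"
      using Cons.IH by blast
    moreover have "pro_buckets_aux A V S0 (s # ss) ! p = pro_buckets_aux A V (S0 \<union> B) ss ! p'"
      using Suc by (simp add: Let_def B_def)
    ultimately show ?thesis using later Suc by auto
  qed
qed

lemma pro_sizes_pos: "x \<in> set (pro_sizes \<tau> \<eta>) \<Longrightarrow> \<eta> \<ge> 1 \<Longrightarrow> x \<ge> 1"
  unfolding pro_sizes_def by auto

lemma marg_antimono:
  assumes mono: "monotone_on_sets V f" and sub: "submodular_on V f"
    and "P \<subseteq> Q" "Q \<subseteq> V" "E \<subseteq> V"
  shows "marg f E Q \<le> marg f E P"
proof -
  have "P \<union> E \<subseteq> V" "P \<subseteq> (P \<union> E) \<inter> Q" "(P \<union> E) \<inter> Q \<subseteq> V" "(P \<union> E) \<union> Q = Q \<union> E"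
    using assms(3-5) by blast+
  moreover from this have "f ((P \<union> E) \<union> Q) + f ((P \<union> E) \<inter> Q) \<le> f (P \<union> E) + f Q"
    using sub assms(4) unfolding submodular_on_def by blast
  moreover from calculation have "f P \<le> f ((P \<union> E) \<inter> Q)"
    using mono unfolding monotone_on_sets_def by blast
  ultimately show ?thesis unfolding marg_def by simp
qed

lemma marg_le_sum_singletons:
  assumes mono: "monotone_on_sets V f" and sub: "submodular_on V f"
    and "finite E" "E \<subseteq> V" "X \<subseteq> V"
  shows "marg f E X \<le> (\<Sum>e\<in>E. marg f {e} X)"
  using assms(3,4)
proof (induction E rule: finite_induct)
  case empty
  then show ?case by (simp add: marg_def)
next
  case (insert e F)
  have "marg f {e} (X \<union> F) \<le> marg f {e} X"
    using marg_antimono[OF mono sub, of X "X \<union> F" "{e}"] insert.prems assms(5) by auto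
  moreover have "marg f (insert e F) X = marg f F X + marg f {e} (X \<union> F)"
    unfolding marg_def by (simp add: insert_commute)
  ultimately show ?case using insert by simp
qed

lemma card_mult_marg_output_le:
  assumes mono: "monotone_on_sets V f" and sub: "submodular_on V f" and "normalized f"
    and valid: "valid_subroutine V A" and iter: "beta_iterative V f \<beta> A" and "\<beta> > 0"
    and "finite T" "T \<subseteq> V" "e \<in> T"
  shows "real (card (set (A s T))) * marg f {e} (set (A s T)) \<le> \<beta> * f (set (A s T))"
proof -
  define X where "X = set (A s T)"
  define n where "n = length (A s T)"
  let ?pre = "prefix_set A s T"
  have "distinct (A s T)" "set (A s T) \<subseteq> T"
    using valid assms(8) unfolding valid_subroutine_def by auto
  then have cardX: "card X = n" and XV: "X \<subseteq> V"
    using assms(8) distinct_card unfolding X_def n_def by blast+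
  have eV: "{e} \<subseteq> V" using assms(8,9) by blast
  have step: "marg f {e} X / \<beta> \<le> f (?pre (Suc i)) - f (?pre i)" if "i < n" for i
  proof -
    have "?pre i \<subseteq> X" unfolding prefix_set_def X_def by (rule set_take_subset)
    then have "marg f {e} X \<le> marg f {e} (?pre i)"
      using marg_antimono[OF mono sub _ XV eV] by blast
    also have "\<dots> \<le> Max ((\<lambda>v. marg f {v} (?pre i)) ` T)"
      using assms(7,9) by (intro Max_ge) auto
    finally have "marg f {e} X / \<beta> \<le> (1 / \<beta>) * Max ((\<lambda>v. marg f {v} (?pre i)) ` T)"
      using \<open>\<beta> > 0\<close> by (simp add: divide_right_mono)
    also have "\<dots> \<le> f (?pre (Suc i)) - f (?pre i)"
      using iter assms(8) that unfolding beta_iterative_def n_def by blast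
    finally show ?thesis .
  qed
  have "real n * (marg f {e} X / \<beta>) \<le> (\<Sum>i<n. f (?pre (Suc i)) - f (?pre i))"
    using sum_mono[of "{..<n}", OF step] by simp
  also have "\<dots> = f (?pre n) - f (?pre 0)" by (rule sum_lessThan_telescope)
  also have "\<dots> = f X"
    using \<open>normalized f\<close> unfolding prefix_set_def X_def n_def normalized_def by simp
  finally have "real (card X) * marg f {e} X / \<beta> \<le> f X" using cardX by simp
  then show ?thesis using \<open>\<beta> > 0\<close> unfolding X_def by (simp add: pos_divide_le_eq mult.commute)
qed

lemma marg_output_le:
  assumes mono: "monotone_on_sets V f" and sub: "submodular_on V f" and "normalized f"
    and valid: "valid_subroutine V A" and iter: "beta_iterative V f \<beta> A" and "\<beta> > 0"
    and "finite T" "T \<subseteq> V" "E \<subseteq> T" "s \<ge> 1"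
  shows "marg f E (set (A s T)) \<le> \<beta> * real (card E) / real (card (set (A s T))) * f (set (A s T))"
proof (cases "card (set (A s T)) = 0")
  case True
  \<comment> \<open>Then T and E are empty; the right-hand side is 0 because of division by 0.\<close>
  have "length (A s T) = min s (card T)" "distinct (A s T)"
    using valid assms(8) unfolding valid_subroutine_def by auto
  with True have "min s (card T) = 0" by (simp add: distinct_card)
  with \<open>s \<ge> 1\<close> have "T = {}" using assms(7) by (simp add: min_def split: if_splits)
  then show ?thesis using assms(9) by (simp add: marg_def)
next
  case False
  define X where "X = set (A s T)"
  have cardX: "card X > 0" using False unfolding X_def neq0_conv .
  have "X \<subseteq> T" using valid assms(8) unfolding valid_subroutine_def X_def by simp
  then have XV: "X \<subseteq> V" using assms(8) by (rule order_trans)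
  have "finite E" using assms(7,9) by (rule finite_subset[rotated])
  moreover have "E \<subseteq> V" using assms(8,9) by blast
  ultimately have "marg f E X \<le> (\<Sum>e\<in>E. marg f {e} X)"
    by (rule marg_le_sum_singletons[OF mono sub _ _ XV])
  also have "\<dots> \<le> (\<Sum>e\<in>E. \<beta> * f X / real (card X))"
  proof (rule sum_mono)
    fix e assume "e \<in> E"
    then have "real (card X) * marg f {e} X \<le> \<beta> * f X"
      unfolding X_def using assms(9) by (intro card_mult_marg_output_le[OF assms(1-8)]) auto
    then show "marg f {e} X \<le> \<beta> * f X / real (card X)"
      using cardX by (simp add: pos_le_divide_eq mult.commute)
  qed
  also have "\<dots> = \<beta> * real (card E) / real (card X) * f X" by simp
  finally show ?thesis unfolding X_def .
qed

lemma union_diff_ge_div_one_plus: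
  assumes mono: "monotone_on_sets V f" and sub: "submodular_on V f"
    and "X \<subseteq> V" "Y \<subseteq> V" "E \<subseteq> Y" "\<alpha> \<ge> 0" and marg_E: "marg f E X \<le> \<alpha> * f X"
  shows "f Y / (1 + \<alpha>) \<le> f (X \<union> (Y - E))"
proof -
  let ?Z = "X \<union> (Y - E)"
  have sets: "Y \<subseteq> X \<union> Y" "X \<union> Y \<subseteq> V" "X \<subseteq> ?Z" "?Z \<subseteq> V" "E \<subseteq> V" "?Z \<union> E = X \<union> Y"
    using assms(3-5) by blast+
  have "f Y \<le> f (X \<union> Y)"
    using mono sets(1,2) unfolding monotone_on_sets_def by blast
  moreover have "f (X \<union> Y) = f ?Z + marg f E ?Z"
    unfolding marg_def sets(6) by simp
  moreover have "marg f E ?Z \<le> marg f E X"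
    using marg_antimono[OF mono sub sets(3,4,5)] .
  moreover have "\<alpha> * f X \<le> \<alpha> * f ?Z"
    using mono sets(3,4) \<open>\<alpha> \<ge> 0\<close> unfolding monotone_on_sets_def by (simp add: mult_left_mono)
  ultimately have "f Y \<le> (1 + \<alpha>) * f ?Z"
    using marg_E by (simp add: algebra_simps)
  then show ?thesis using \<open>\<alpha> \<ge> 0\<close> by (simp add: divide_le_eq mult.commute)
qed

theorem lemma4:
  fixes V :: "'a set" and f :: "'a set \<Rightarrow> real" and A :: "nat \<Rightarrow> 'a set \<Rightarrow> 'a list"
    and k \<tau> \<eta> :: nat and \<beta> :: real and p q :: nat and E :: "'a set"
  assumes "finite V"
    and "normalized f" and "nonneg_on V f" and "monotone_on_sets V f" and "submodular_on V f"
    and "valid_subroutine V A" and "\<beta> \<ge> 1" and "beta_iterative V f \<beta> A"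
    and "\<eta> \<ge> 1" and "real \<eta> \<ge> 4 * (log 2 (real k) + 1)"
    and "2 \<le> \<tau>" and "real \<tau> \<le> real k / (3 * real \<eta> * (log 2 (real k) + 2))"
    and "p < q" and "q < length (pro_buckets A V \<tau> \<eta>)"
    and "E \<subseteq> pro_buckets A V \<tau> \<eta> ! q"
  shows "let X = pro_buckets A V \<tau> \<eta> ! p; Y = pro_buckets A V \<tau> \<eta> ! q;
             \<alpha> = \<beta> * real (card E) / real (card X)
         in f (X \<union> (Y - E)) \<ge> f Y / (1 + \<alpha>) \<and> marg f E X \<le> \<alpha> * f X"
proof -
  define ss where "ss = pro_sizes \<tau> \<eta>"
  define X where "X = pro_buckets A V \<tau> \<eta> ! p"
  define Y where "Y = pro_buckets A V \<tau> \<eta> ! q"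
  define \<alpha> where "\<alpha> = \<beta> * real (card E) / real (card X)"
  have q_less: "q < length ss"
    using assms(14) by (simp add: pro_buckets_def length_pro_buckets_aux ss_def)
  then obtain S where X_eq: "X = set (A (ss ! p) (V - S))" and Y_sub: "Y \<subseteq> V - S - X"
    using pro_buckets_aux_later_bucket[OF assms(6,13)]
    unfolding X_def Y_def pro_buckets_def ss_def by blast
  have "ss ! p \<ge> 1"
    using pro_sizes_pos[OF nth_mem assms(9)] q_less assms(13) unfolding ss_def by simp
  moreover have "E \<subseteq> V - S" "V - S \<subseteq> V" "finite (V - S)"
    using Y_sub assms(1,15) unfolding Y_def by auto
  ultimately have marg_E: "marg f E X \<le> \<alpha> * f X"
    unfolding \<alpha>_def X_eq using marg_output_le[OF assms(4,5,2,6,8)] assms(7) by simp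
  have "X \<subseteq> V - S"
    using assms(6) unfolding X_eq valid_subroutine_def by blast
  then have "X \<subseteq> V" "Y \<subseteq> V" using Y_sub by auto
  moreover have "\<alpha> \<ge> 0" using assms(7) by (simp add: \<alpha>_def)
  ultimately have "f Y / (1 + \<alpha>) \<le> f (X \<union> (Y - E))"
    using union_diff_ge_div_one_plus[OF assms(4,5)] marg_E assms(15) unfolding Y_def by blast
  with marg_E show ?thesis by (simp add: X_def Y_def \<alpha>_def)
qed

end
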